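(* Let $\Omega\subset\mathbb{R}^2$ be the open region bounded by a triangle positioned so that one vertex is at the origin and the opposite side lies on the vertical line $\{x=\ell\}$ for some $\ell>0$ (so that $\Omega=\{(x,y):0<x<\ell,\ \tfrac{b_1}{\ell}x<y<\tfrac{b_2}{\ell}x\}$ for some real $b_1<b_2$). Let $L$ be the length of the longest side of the triangle. Let $u\in H^1_0(\Omega)\cap H^s(\Omega)$ for every $s$. Then \[ \|u\|_{L^2(\Omega)}\le L\sqrt{e-1}\,\|\partial_x u\|_{L^2(\Omega)}. \] *)

theory Defs
  imports "HOL-Analysis.Analysis"
begin

definition px :: "(real \<times> real \<Rightarrow> real) \<Rightarrow> real \<times> real \<Rightarrow> real" where
  "px f = (\<lambda>(x, y). deriv (\<lambda>t. f (t, y)) x)"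

definition py :: "(real \<times> real \<Rightarrow> real) \<Rightarrow> real \<times> real \<Rightarrow> real" where
  "py f = (\<lambda>(x, y). deriv (\<lambda>t. f (x, t)) y)"

definition iter_pd :: "bool list \<Rightarrow> (real \<times> real \<Rightarrow> real) \<Rightarrow> real \<times> real \<Rightarrow> real" where
  "iter_pd ds f = foldr (\<lambda>d h. if d then px h else py h) ds f"

definition smooth2 :: "(real \<times> real \<Rightarrow> real) \<Rightarrow> bool" where
  "smooth2 f \<longleftrightarrow> (\<forall>ds. continuous_on UNIV (iter_pd ds f) \<and>
     (\<forall>x y. (\<lambda>t. iter_pd ds f (t, y)) differentiable (at x) \<and>
            (\<lambda>t. iter_pd ds f (x, t)) differentiable (at y)))"

definition test_fun :: "(real \<times> real) set \<Rightarrow> (real \<times> real \<Rightarrow> real) \<Rightarrow> bool" where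
  "test_fun \<Omega> \<phi> \<longleftrightarrow> smooth2 \<phi> \<and> compact (closure {p. \<phi> p \<noteq> 0}) \<and>
     closure {p. \<phi> p \<noteq> 0} \<subseteq> \<Omega>"

definition Dxy :: "nat \<Rightarrow> nat \<Rightarrow> (real \<times> real \<Rightarrow> real) \<Rightarrow> real \<times> real \<Rightarrow> real" where
  "Dxy i j f = (px ^^ i) ((py ^^ j) f)"

definition L2 :: "(real \<times> real) set \<Rightarrow> (real \<times> real \<Rightarrow> real) \<Rightarrow> bool" where
  "L2 \<Omega> f \<longleftrightarrow> set_borel_measurable lborel \<Omega> f \<and> set_integrable lborel \<Omega> (\<lambda>p. (f p)\<^sup>2)"

definition L2norm :: "(real \<times> real) set \<Rightarrow> (real \<times> real \<Rightarrow> real) \<Rightarrow> real" where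
  "L2norm \<Omega> f = sqrt (LINT p:\<Omega>|lborel. (f p)\<^sup>2)"

definition weak_deriv :: "(real \<times> real) set \<Rightarrow> nat \<Rightarrow> nat \<Rightarrow> (real \<times> real \<Rightarrow> real) \<Rightarrow> (real \<times> real \<Rightarrow> real) \<Rightarrow> bool" where
  "weak_deriv \<Omega> i j u v \<longleftrightarrow>
     (\<forall>\<phi>. test_fun \<Omega> \<phi> \<longrightarrow>
        set_integrable lborel \<Omega> (\<lambda>p. u p * Dxy i j \<phi> p) \<and>
        set_integrable lborel \<Omega> (\<lambda>p. v p * \<phi> p) \<and>
        (LINT p:\<Omega>|lborel. u p * Dxy i j \<phi> p) = (-1) ^ (i + j) * (LINT p:\<Omega>|lborel. v p * \<phi> p))"

text \<open>\<open>u \<in> H\<^sup>s(\<Omega>)\<close> for every s: all weak derivatives of all orders exist and lie in \<open>L\<^sup>2(\<Omega>)\<close>.\<close>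
definition H_all :: "(real \<times> real) set \<Rightarrow> (real \<times> real \<Rightarrow> real) \<Rightarrow> bool" where
  "H_all \<Omega> u \<longleftrightarrow> L2 \<Omega> u \<and> (\<forall>i j. \<exists>v. L2 \<Omega> v \<and> weak_deriv \<Omega> i j u v)"

definition H10 :: "(real \<times> real) set \<Rightarrow> (real \<times> real \<Rightarrow> real) \<Rightarrow> bool" where
  "H10 \<Omega> u \<longleftrightarrow> (\<exists>ux uy. L2 \<Omega> u \<and> L2 \<Omega> ux \<and> L2 \<Omega> uy \<and>
      weak_deriv \<Omega> 1 0 u ux \<and> weak_deriv \<Omega> 0 1 u uy \<and>
      (\<exists>\<phi>s. (\<forall>n. test_fun \<Omega> (\<phi>s n)) \<and>
         (\<lambda>n. L2norm \<Omega> (\<lambda>p. \<phi>s n p - u p)) \<longlonglongrightarrow> 0 \<and>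
         (\<lambda>n. L2norm \<Omega> (\<lambda>p. px (\<phi>s n) p - ux p)) \<longlonglongrightarrow> 0 \<and>
         (\<lambda>n. L2norm \<Omega> (\<lambda>p. py (\<phi>s n) p - uy p)) \<longlonglongrightarrow> 0))"

end

(*
  Since L >= l and e - 1 >= 1, it suffices to prove the Poincare inequality
  ||u|| <= l ||d_x u|| on the strip 0 < x < l containing Omega.

  For a test function phi, h = phi^2 + (2x - l) phi d_x phi is the x-derivative of
  (x - l/2) phi^2 and so integrates to zero along every horizontal line, while completing
  the square gives phi^2 <= 2h + l^2 (d_x phi)^2 on the strip. The inequality passes to u
  along the H^1_0-approximating sequence.
*)

theory Submission
  imports Defs
begin

section \<open>Square-integrable functions\<close>

lemma abs_mult_le_sum_squares: "\<bar>x * y\<bar> \<le> x\<^sup>2 + y\<^sup>2" for x y :: real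
proof -
  have "2 * \<bar>x\<bar> * \<bar>y\<bar> \<le> x\<^sup>2 + y\<^sup>2"
    using sum_squares_bound[of "\<bar>x\<bar>" "\<bar>y\<bar>"] by simp
  moreover have "0 \<le> \<bar>x\<bar> * \<bar>y\<bar>" by simp
  ultimately show ?thesis by (simp only: abs_mult)
qed

lemma integral_mult_le_Cauchy_Schwarz:
  fixes f g :: "'a \<Rightarrow> real"
  assumes [measurable]: "f \<in> borel_measurable M" "g \<in> borel_measurable M"
    and f2: "integrable M (\<lambda>x. (f x)\<^sup>2)" and g2: "integrable M (\<lambda>x. (g x)\<^sup>2)"
  shows "\<bar>\<integral>x. f x * g x \<partial>M\<bar> \<le> sqrt (\<integral>x. (f x)\<^sup>2 \<partial>M) * sqrt (\<integral>x. (g x)\<^sup>2 \<partial>M)"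
proof -
  have fg: "integrable M (\<lambda>x. \<bar>f x * g x\<bar>)"
    by (rule Bochner_Integration.integrable_bound[OF Bochner_Integration.integrable_add[OF f2 g2]])
      (auto simp: abs_mult_le_sum_squares)
  have "ennreal ((\<integral>x. \<bar>f x * g x\<bar> \<partial>M)\<^sup>2) = (\<integral>\<^sup>+x. ennreal \<bar>f x\<bar> * ennreal \<bar>g x\<bar> \<partial>M)\<^sup>2"
    using nn_integral_eq_integral[OF fg]
    by (simp add: ennreal_power abs_mult ennreal_mult integral_nonneg_AE)
  also have "\<dots> \<le> (\<integral>\<^sup>+x. ennreal \<bar>f x\<bar> ^ 2 \<partial>M) * (\<integral>\<^sup>+x. ennreal \<bar>g x\<bar> ^ 2 \<partial>M)"
    by (rule Cauchy_Schwarz_nn_integral) auto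
  also have "\<dots> = ennreal ((\<integral>x. (f x)\<^sup>2 \<partial>M) * (\<integral>x. (g x)\<^sup>2 \<partial>M))"
    using nn_integral_eq_integral[OF f2] nn_integral_eq_integral[OF g2]
    by (simp add: ennreal_power ennreal_mult integral_nonneg_AE)
  finally have "(\<integral>x. \<bar>f x * g x\<bar> \<partial>M)\<^sup>2 \<le> (\<integral>x. (f x)\<^sup>2 \<partial>M) * (\<integral>x. (g x)\<^sup>2 \<partial>M)"
    by (subst (asm) ennreal_le_iff) (auto intro: integral_nonneg_AE)
  then have "(\<integral>x. \<bar>f x * g x\<bar> \<partial>M) \<le> sqrt (\<integral>x. (f x)\<^sup>2 \<partial>M) * sqrt (\<integral>x. (g x)\<^sup>2 \<partial>M)"
    by (simp add: real_le_rsqrt real_sqrt_mult[symmetric])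
  then show ?thesis
    using integral_abs_bound[of M "\<lambda>x. f x * g x"] by linarith
qed

lemma set_borel_measurable_real_iff:
  "set_borel_measurable M S f \<longleftrightarrow> (\<lambda>x. indicator S x * f x :: real) \<in> borel_measurable M"
  by (simp add: set_borel_measurable_def)

lemma set_borel_measurable_add:
  fixes f g :: "_ \<Rightarrow> real"
  assumes "set_borel_measurable M S f" "set_borel_measurable M S g"
  shows "set_borel_measurable M S (\<lambda>x. f x + g x)"
  using borel_measurable_add[OF assms[unfolded set_borel_measurable_real_iff]]
  by (simp add: set_borel_measurable_real_iff distrib_left)

lemma set_borel_measurable_mult:
  fixes f g :: "_ \<Rightarrow> real"
  assumes "set_borel_measurable M S f" "set_borel_measurable M S g"
  shows "set_borel_measurable M S (\<lambda>x. f x * g x)"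
proof -
  have "(\<lambda>x. indicator S x * (f x * g x)) = (\<lambda>x. (indicator S x * f x) * (indicator S x * g x) :: real)"
    by (simp add: fun_eq_iff split: split_indicator)
  then show ?thesis
    using borel_measurable_times[OF assms[unfolded set_borel_measurable_real_iff]]
    by (simp add: set_borel_measurable_real_iff)
qed

lemma L2_mult_integrable:
  assumes "L2 S f" "L2 S g"
  shows "set_integrable lborel S (\<lambda>p. f p * g p)"
proof (rule set_integrable_bound)
  show "set_integrable lborel S (\<lambda>p. (f p)\<^sup>2 + (g p)\<^sup>2)"
    using assms unfolding L2_def by (intro set_integral_add(1)) auto
  show "set_borel_measurable lborel S (\<lambda>p. f p * g p)"
    using assms unfolding L2_def by (blast intro: set_borel_measurable_mult)
  show "AE p in lborel. p \<in> S \<longrightarrow> norm (f p * g p) \<le> norm ((f p)\<^sup>2 + (g p)\<^sup>2)"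
    by (simp add: abs_mult_le_sum_squares)
qed

lemma L2_add:
  assumes "L2 S f" "L2 S g"
  shows "L2 S (\<lambda>p. f p + g p)"
  unfolding L2_def
proof
  show "set_borel_measurable lborel S (\<lambda>p. f p + g p)"
    using assms unfolding L2_def by (blast intro: set_borel_measurable_add)
  have "set_integrable lborel S (\<lambda>p. (f p)\<^sup>2 + (g p)\<^sup>2 + 2 * (f p * g p))"
    using assms L2_mult_integrable[OF assms] unfolding L2_def
    by (intro set_integral_add(1) set_integrable_mult_right) auto
  then show "set_integrable lborel S (\<lambda>p. (f p + g p)\<^sup>2)"
    by (simp add: power2_sum mult.assoc)
qed

lemma L2_uminus: "L2 S f \<Longrightarrow> L2 S (\<lambda>p. - f p)"
  unfolding L2_def set_borel_measurable_real_iff by simp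

lemma L2_diff: "L2 S f \<Longrightarrow> L2 S g \<Longrightarrow> L2 S (\<lambda>p. f p - g p)"
  using L2_add[of S f "\<lambda>p. - g p"] L2_uminus[of S g] by simp

lemma set_integral_power2_nonneg: "0 \<le> (LINT p:S|M. (f p)\<^sup>2 :: real)"
  unfolding set_lebesgue_integral_def by (rule Bochner_Integration.integral_nonneg) simp

lemma L2norm_nonneg: "L2norm S f \<ge> 0"
  by (simp add: L2norm_def set_integral_power2_nonneg)

lemma L2norm_power2: "(L2norm S f)\<^sup>2 = (LINT p:S|lborel. (f p)\<^sup>2)"
  by (simp add: L2norm_def set_integral_power2_nonneg)

lemma L2norm_diff_commute: "L2norm S (\<lambda>p. f p - g p) = L2norm S (\<lambda>p. g p - f p)"
  by (simp add: L2norm_def power2_commute)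

lemma L2_Cauchy_Schwarz:
  assumes "L2 S f" "L2 S g"
  shows "\<bar>LINT p:S|lborel. f p * g p\<bar> \<le> L2norm S f * L2norm S g"
proof -
  have sq: "(indicator S p * h p)\<^sup>2 = indicator S p * (h p)\<^sup>2" for h :: "_ \<Rightarrow> real" and p
    by (simp split: split_indicator)
  have pr: "indicator S p * f p * (indicator S p * g p) = indicator S p * (f p * g p)" for p
    by (simp split: split_indicator)
  have "\<bar>\<integral>p. indicator S p * f p * (indicator S p * g p) \<partial>lborel\<bar>
      \<le> sqrt (\<integral>p. (indicator S p * f p)\<^sup>2 \<partial>lborel) * sqrt (\<integral>p. (indicator S p * g p)\<^sup>2 \<partial>lborel)"
    using assms
    by (intro integral_mult_le_Cauchy_Schwarz)
      (simp_all add: L2_def set_borel_measurable_def set_integrable_def sq)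
  then show ?thesis
    by (simp add: L2norm_def set_lebesgue_integral_def sq pr)
qed

lemma L2norm_triangle_ineq:
  assumes f: "L2 S f" and g: "L2 S g"
  shows "L2norm S (\<lambda>p. f p + g p) \<le> L2norm S f + L2norm S g"
proof (rule power2_le_imp_le)
  have f2: "set_integrable lborel S (\<lambda>p. (f p)\<^sup>2)" and g2: "set_integrable lborel S (\<lambda>p. (g p)\<^sup>2)"
    using f g unfolding L2_def by blast+
  have fg: "set_integrable lborel S (\<lambda>p. 2 * (f p * g p))"
    by (rule set_integrable_mult_right[OF L2_mult_integrable[OF f g]])
  have "(L2norm S (\<lambda>p. f p + g p))\<^sup>2 = (LINT p:S|lborel. (f p)\<^sup>2 + (g p)\<^sup>2 + 2 * (f p * g p))"
    by (simp add: L2norm_power2 power2_sum mult.assoc)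
  also have "\<dots> = (L2norm S f)\<^sup>2 + (L2norm S g)\<^sup>2 + 2 * (LINT p:S|lborel. f p * g p)"
    by (simp add: set_integral_add(2)[OF set_integral_add(1)[OF f2 g2] fg]
        set_integral_add(2)[OF f2 g2] set_integral_mult_right L2norm_power2)
  also have "\<dots> \<le> (L2norm S f)\<^sup>2 + (L2norm S g)\<^sup>2 + 2 * (L2norm S f * L2norm S g)"
    using L2_Cauchy_Schwarz[OF f g] by linarith
  also have "\<dots> = (L2norm S f + L2norm S g)\<^sup>2"
    by (simp add: power2_sum)
  finally show "(L2norm S (\<lambda>p. f p + g p))\<^sup>2 \<le> (L2norm S f + L2norm S g)\<^sup>2" .
  show "0 \<le> L2norm S f + L2norm S g"
    by (simp add: L2norm_nonneg add_nonneg_nonneg)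
qed

lemma abs_L2norm_diff_le:
  assumes "L2 S f" "L2 S g"
  shows "\<bar>L2norm S f - L2norm S g\<bar> \<le> L2norm S (\<lambda>p. f p - g p)"
proof -
  have "L2norm S f \<le> L2norm S g + L2norm S (\<lambda>p. f p - g p)"
    using L2norm_triangle_ineq[OF assms(2) L2_diff[OF assms]] by simp
  moreover have "L2norm S g \<le> L2norm S f + L2norm S (\<lambda>p. g p - f p)"
    using L2norm_triangle_ineq[OF assms(1) L2_diff[OF assms(2,1)]] by simp
  ultimately show ?thesis
    by (simp add: L2norm_diff_commute[of S g f])
qed

lemma L2norm_tendsto:
  assumes "L2 S f" "\<And>n. L2 S (fs n)" "(\<lambda>n. L2norm S (\<lambda>p. fs n p - f p)) \<longlonglongrightarrow> 0"
  shows "(\<lambda>n. L2norm S (fs n)) \<longlonglongrightarrow> L2norm S f"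
proof -
  have "(\<lambda>n. L2norm S (fs n) - L2norm S f) \<longlonglongrightarrow> 0"
    using assms(3) by (rule Lim_null_comparison[rotated])
      (simp add: abs_L2norm_diff_le[OF assms(2,1)])
  then show ?thesis
    by (simp add: LIM_zero_iff)
qed

lemma L2_inner_tendsto:
  assumes g: "L2 S g" and f: "L2 S f" and fs: "\<And>n. L2 S (fs n)"
    and lim: "(\<lambda>n. L2norm S (\<lambda>p. fs n p - f p)) \<longlonglongrightarrow> 0"
  shows "(\<lambda>n. LINT p:S|lborel. g p * fs n p) \<longlonglongrightarrow> (LINT p:S|lborel. g p * f p)"
proof -
  have "\<bar>(LINT p:S|lborel. g p * fs n p) - (LINT p:S|lborel. g p * f p)\<bar>
      \<le> L2norm S g * L2norm S (\<lambda>p. fs n p - f p)" for n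
  proof -
    have "(LINT p:S|lborel. g p * fs n p) - (LINT p:S|lborel. g p * f p)
        = (LINT p:S|lborel. g p * fs n p - g p * f p)"
      by (rule set_integral_diff(2)[symmetric, OF L2_mult_integrable[OF g fs] L2_mult_integrable[OF g f]])
    also have "\<dots> = (LINT p:S|lborel. g p * (fs n p - f p))"
      by (simp add: right_diff_distrib)
    finally show ?thesis
      using L2_Cauchy_Schwarz[OF g L2_diff[OF fs f]] by simp
  qed
  then have "(\<lambda>n. (LINT p:S|lborel. g p * fs n p) - (LINT p:S|lborel. g p * f p)) \<longlonglongrightarrow> 0"
    by (intro Lim_null_comparison[OF always_eventually tendsto_mult_right_zero[OF lim, of "L2norm S g"]])
      simp
  then show ?thesis
    by (simp add: LIM_zero_iff)
qed

lemma L2norm_le_of_inner_eq_on_approx: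
  assumes v: "L2 S v" and w: "L2 S w" and \<psi>s: "\<And>n. L2 S (\<psi>s n)"
    and lim: "(\<lambda>n. L2norm S (\<lambda>p. \<psi>s n p - w p)) \<longlonglongrightarrow> 0"
    and eq: "\<And>n. (LINT p:S|lborel. v p * \<psi>s n p) = (LINT p:S|lborel. w p * \<psi>s n p)"
  shows "L2norm S w \<le> L2norm S v"
proof -
  have "(\<lambda>n. LINT p:S|lborel. w p * \<psi>s n p) \<longlonglongrightarrow> (LINT p:S|lborel. v p * w p)"
    using L2_inner_tendsto[OF v w \<psi>s lim] by (simp only: eq)
  then have "(LINT p:S|lborel. w p * w p) = (LINT p:S|lborel. v p * w p)"
    by (rule LIMSEQ_unique[OF L2_inner_tendsto[OF w w \<psi>s lim]])
  moreover have "L2norm S w * L2norm S w = (LINT p:S|lborel. w p * w p)"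
    using L2norm_power2[of S w] by (simp add: power2_eq_square)
  ultimately have le: "L2norm S w * L2norm S w \<le> L2norm S v * L2norm S w"
    using L2_Cauchy_Schwarz[OF v w] by linarith
  show ?thesis
  proof (cases "L2norm S w = 0")
    case True
    then show ?thesis by (simp add: L2norm_nonneg)
  next
    case False
    then have "0 < L2norm S w" using L2norm_nonneg[of S w] by linarith
    then show ?thesis by (rule mult_right_le_imp_le[OF le])
  qed
qed

section \<open>Smooth test functions\<close>

lemma iter_pd_Nil: "iter_pd [] f = f"
  by (simp add: iter_pd_def)

lemma iter_pd_px: "iter_pd ds (px f) = iter_pd (ds @ [True]) f"
  by (simp add: iter_pd_def)

lemma smooth2_px: "smooth2 f \<Longrightarrow> smooth2 (px f)"
  unfolding smooth2_def iter_pd_px by blast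

lemma smooth2_continuous: "smooth2 f \<Longrightarrow> continuous_on UNIV f"
  unfolding smooth2_def using iter_pd_Nil[of f] by (metis (no_types))

lemma smooth2_has_derivative_x:
  assumes "smooth2 f"
  shows "((\<lambda>t. f (t, y)) has_real_derivative px f (x, y)) (at x)"
proof -
  have "(\<lambda>t. iter_pd [] f (t, y)) differentiable (at x)"
    using assms unfolding smooth2_def by blast
  then show ?thesis
    by (simp add: iter_pd_Nil px_def DERIV_deriv_iff_real_differentiable)
qed

lemma zero_outside_closure_support: "p \<notin> closure {q. f q \<noteq> 0} \<Longrightarrow> f p = 0"
  using closure_subset[of "{q. f q \<noteq> 0}"] by auto

lemma px_eq_0_outside_support:
  assumes "p \<notin> closure {q. f q \<noteq> 0}"
  shows "px f p = 0"
proof -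
  obtain x y where p: "p = (x, y)" by fastforce
  obtain e where "e > 0" and e: "ball p e \<subseteq> - closure {q. f q \<noteq> 0}"
    using assms open_contains_ball[of "- closure {q. f q \<noteq> 0}"] by blast
  have "f (t, y) = 0" if "t \<in> ball x e" for t
  proof -
    have "(t, y) \<in> ball p e"
      using that by (simp add: p dist_Pair_Pair)
    then have "(t, y) \<notin> closure {q. f q \<noteq> 0}"
      using e by blast
    then show ?thesis
      by (rule zero_outside_closure_support)
  qed
  then have "((\<lambda>t. f (t, y)) has_real_derivative 0) (at x)"
    by (intro has_field_derivative_transform_within_open[where S="ball x e", OF DERIV_const])
      (simp_all add: \<open>e > 0\<close>)
  then show ?thesis
    by (simp add: p px_def DERIV_imp_deriv)
qed

lemma test_fun_px:
  assumes "test_fun \<Omega> \<phi>"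
  shows "test_fun \<Omega> (px \<phi>)"
proof -
  have "{p. px \<phi> p \<noteq> 0} \<subseteq> closure {p. \<phi> p \<noteq> 0}"
    using px_eq_0_outside_support by blast
  then have sub: "closure {p. px \<phi> p \<noteq> 0} \<subseteq> closure {p. \<phi> p \<noteq> 0}"
    by (rule closure_minimal) simp
  then have "closure {p. \<phi> p \<noteq> 0} \<inter> closure {p. px \<phi> p \<noteq> 0} = closure {p. px \<phi> p \<noteq> 0}"
    by blast
  moreover have "compact (closure {p. \<phi> p \<noteq> 0} \<inter> closure {p. px \<phi> p \<noteq> 0})"
    using assms unfolding test_fun_def by (intro compact_Int_closed) simp_all
  ultimately show ?thesis
    using assms sub smooth2_px unfolding test_fun_def by auto
qed

lemma set_integrable_compact_support:
  fixes g :: "real \<times> real \<Rightarrow> real"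
  assumes "continuous_on UNIV g" "compact C" "C \<subseteq> \<Omega>" "\<And>p. p \<notin> C \<Longrightarrow> g p = 0"
  shows "set_integrable lborel \<Omega> g"
proof -
  have "(\<lambda>p. indicator C p *\<^sub>R g p) = (\<lambda>p. indicator \<Omega> p *\<^sub>R g p)"
  proof
    show "indicator C p *\<^sub>R g p = indicator \<Omega> p *\<^sub>R g p" for p
      using assms(3) assms(4)[of p] by (cases "p \<in> C") auto
  qed
  then show ?thesis
    using borel_integrable_compact[OF assms(2) continuous_on_subset[OF assms(1)]]
    unfolding set_integrable_def by simp
qed

lemma L2_compact_support:
  fixes g :: "real \<times> real \<Rightarrow> real"
  assumes "continuous_on UNIV g" "compact C" "C \<subseteq> \<Omega>" "\<And>p. p \<notin> C \<Longrightarrow> g p = 0"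
  shows "L2 \<Omega> g"
  unfolding L2_def
proof
  show "set_borel_measurable lborel \<Omega> g"
    using set_integrable_compact_support[OF assms]
    unfolding set_integrable_def set_borel_measurable_def by (rule borel_measurable_integrable)
  show "set_integrable lborel \<Omega> (\<lambda>p. (g p)\<^sup>2)"
    using assms by (intro set_integrable_compact_support[of _ C] continuous_on_power) auto
qed

lemma set_integral_compact_support_eq_integral:
  fixes g :: "real \<times> real \<Rightarrow> real"
  assumes "continuous_on UNIV g" "compact C" "C \<subseteq> \<Omega>" "C \<subseteq> K" "\<And>p. p \<notin> C \<Longrightarrow> g p = 0"
  shows "(LINT p:\<Omega>|lborel. g p) = integral K g"
proof -
  have "(\<lambda>p. if p \<in> \<Omega> then g p else 0) = g" "(\<lambda>p. if p \<in> K then g p else 0) = g"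
    using assms(3-5) by (auto simp: fun_eq_iff)
  then have "integral \<Omega> g = integral K g"
    using integral_restrict_UNIV[of \<Omega> g] integral_restrict_UNIV[of K g] by simp
  then show ?thesis
    using set_borel_integral_eq_integral(2)[OF set_integrable_compact_support[OF assms(1-3,5)]]
    by simp
qed

lemma test_fun_L2:
  assumes "test_fun \<Omega> \<phi>"
  shows "L2 \<Omega> \<phi>"
  using assms unfolding test_fun_def
  by (intro L2_compact_support[of _ "closure {p. \<phi> p \<noteq> 0}"] smooth2_continuous
      zero_outside_closure_support) auto

lemma weak_deriv_test_fun_eq:
  assumes "weak_deriv \<Omega> i j u v" "weak_deriv \<Omega> i j u w" "test_fun \<Omega> \<phi>"
  shows "(LINT p:\<Omega>|lborel. v p * \<phi> p) = (LINT p:\<Omega>|lborel. w p * \<phi> p)"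
  using assms unfolding weak_deriv_def by auto

section \<open>Poincare inequality in the x-direction\<close>

lemma integral_weighted_square_deriv_eq_0:
  fixes g g' :: "real \<Rightarrow> real"
  assumes l: "0 \<le> l" and deriv: "\<And>x. (g has_real_derivative g' x) (at x)"
    and zero: "g 0 = 0" "g l = 0"
  shows "integral {0..l} (\<lambda>x. (g x)\<^sup>2 + (2 * x - l) * g x * g' x) = 0"
proof -
  have "((\<lambda>t. (t - l / 2) * (g t * g t)) has_real_derivative (g x)\<^sup>2 + (2 * x - l) * g x * g' x) (at x)"
    for x
    using DERIV_mult[OF DERIV_diff[OF DERIV_ident DERIV_const] DERIV_mult[OF deriv deriv]]
    by (rule DERIV_cong) (simp add: algebra_simps power2_eq_square)
  then have "((\<lambda>x. (g x)\<^sup>2 + (2 * x - l) * g x * g' x) has_integral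
      (l - l / 2) * (g l * g l) - (0 - l / 2) * (g 0 * g 0)) {0..l}"
    using l by (intro fundamental_theorem_of_calculus)
      (auto simp: has_real_derivative_iff_has_vector_derivative intro: has_vector_derivative_at_within)
  then show ?thesis
    by (simp add: zero integral_unique)
qed

lemma integral_cbox_Pair_eq_0:
  fixes h :: "real \<times> real \<Rightarrow> real"
  assumes "continuous_on (cbox (a, c) (b, d)) h" "\<And>y. integral {a..b} (\<lambda>x. h (x, y)) = 0"
  shows "integral (cbox (a, c) (b, d)) h = 0"
proof -
  have "integral (cbox (a, c) (b, d)) h = integral (cbox a b) (\<lambda>x. integral (cbox c d) (\<lambda>y. h (x, y)))"
    using assms(1) by (rule integral_prod_continuous)
  also have "\<dots> = integral (cbox c d) (\<lambda>y. integral (cbox a b) (\<lambda>x. h (x, y)))"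
    using assms(1) by (intro integral_swap_continuous) (simp add: case_prod_beta')
  also have "\<dots> = 0"
    using assms(2) by simp
  finally show ?thesis .
qed

lemma poincare_x_box:
  fixes \<phi> \<phi>x :: "real \<times> real \<Rightarrow> real"
  assumes l: "0 \<le> l"
    and cont: "continuous_on UNIV \<phi>" "continuous_on UNIV \<phi>x"
    and deriv: "\<And>x y. ((\<lambda>t. \<phi> (t, y)) has_real_derivative \<phi>x (x, y)) (at x)"
    and zero: "\<And>y. \<phi> (0, y) = 0" "\<And>y. \<phi> (l, y) = 0"
  shows "integral (cbox (0, c) (l, d)) (\<lambda>p. (\<phi> p)\<^sup>2) \<le> l\<^sup>2 * integral (cbox (0, c) (l, d)) (\<lambda>p. (\<phi>x p)\<^sup>2)"
proof -
  define K where "K = cbox (0, c) (l, d)"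
  define h where "h p = (\<phi> p)\<^sup>2 + (2 * fst p - l) * \<phi> p * \<phi>x p" for p
  have h_cont: "continuous_on UNIV h"
    unfolding h_def by (intro continuous_intros cont)
  have "integral {0..l} (\<lambda>x. h (x, y)) = 0" for y
    using integral_weighted_square_deriv_eq_0[OF l, of "\<lambda>t. \<phi> (t, y)" "\<lambda>t. \<phi>x (t, y)"] deriv zero
    by (simp add: h_def)
  then have h_integral: "integral K h = 0"
    unfolding K_def by (intro integral_cbox_Pair_eq_0 continuous_on_subset[OF h_cont]) auto
  have pointwise: "(\<phi> p)\<^sup>2 \<le> 2 * h p + l\<^sup>2 * (\<phi>x p)\<^sup>2" if "p \<in> K" for p
  proof -
    define s where "s = 2 * fst p - l"
    have "\<bar>s\<bar> \<le> \<bar>l\<bar>"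
      using that l by (auto simp: s_def K_def cbox_Pair_eq mem_Times_iff)
    then have "s\<^sup>2 \<le> l\<^sup>2"
      by (simp only: abs_le_square_iff)
    then have "0 \<le> (\<phi> p + s * \<phi>x p)\<^sup>2 + (l\<^sup>2 - s\<^sup>2) * (\<phi>x p)\<^sup>2"
      by simp
    also have "\<dots> = 2 * h p + l\<^sup>2 * (\<phi>x p)\<^sup>2 - (\<phi> p)\<^sup>2"
      by (simp add: h_def s_def power2_eq_square algebra_simps)
    finally show ?thesis by simp
  qed
  have "g integrable_on K" if "continuous_on UNIV g" for g :: "real \<times> real \<Rightarrow> real"
    unfolding K_def using that by (intro integrable_continuous continuous_on_subset[OF that]) auto
  then have integrable: "(\<lambda>p. (\<phi> p)\<^sup>2) integrable_on K" "(\<lambda>p. 2 * h p) integrable_on K"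
    "(\<lambda>p. l\<^sup>2 * (\<phi>x p)\<^sup>2) integrable_on K"
    using cont h_cont by (simp_all add: continuous_intros)
  have "integral K (\<lambda>p. (\<phi> p)\<^sup>2) \<le> integral K (\<lambda>p. 2 * h p + l\<^sup>2 * (\<phi>x p)\<^sup>2)"
    using integrable pointwise by (intro integral_le integrable_add) auto
  also have "\<dots> = 2 * integral K h + l\<^sup>2 * integral K (\<lambda>p. (\<phi>x p)\<^sup>2)"
    using integrable by (simp add: integral_add Henstock_Kurzweil_Integration.integral_mult_right)
  also have "\<dots> = l\<^sup>2 * integral K (\<lambda>p. (\<phi>x p)\<^sup>2)"
    by (simp add: h_integral)
  finally show ?thesis
    unfolding K_def .
qed

lemma poincare_x_test_fun:
  assumes l: "0 \<le> l" and strip: "\<Omega> \<subseteq> {p. 0 < fst p \<and> fst p < l}" and \<phi>: "test_fun \<Omega> \<phi>"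
  shows "L2norm \<Omega> \<phi> \<le> l * L2norm \<Omega> (px \<phi>)"
proof -
  define C where "C = closure {p. \<phi> p \<noteq> 0}"
  have smooth: "smooth2 \<phi>" and C: "compact C" "C \<subseteq> \<Omega>"
    using \<phi> unfolding test_fun_def C_def by blast+
  have vanish: "\<phi> p = 0" "px \<phi> p = 0" if "p \<notin> C" for p
    using that zero_outside_closure_support px_eq_0_outside_support unfolding C_def by blast+
  obtain B where B: "\<forall>p\<in>C. norm p \<le> B"
    using compact_imp_bounded[OF C(1)] bounded_iff by blast
  define K where "K = cbox (0, -B) (l, B)"
  have "C \<subseteq> K"
  proof
    fix p assume "p \<in> C"
    obtain a b where p: "p = (a, b)" by fastforce
    have "0 < a" "a < l"
      using \<open>p \<in> C\<close> C(2) strip p by auto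
    moreover have "\<bar>b\<bar> \<le> B"
      using \<open>p \<in> C\<close> B norm_snd_le[of b a] p by fastforce
    ultimately show "p \<in> K"
      by (auto simp: p K_def cbox_Pair_eq)
  qed
  have "\<phi> (0, y) = 0" "\<phi> (l, y) = 0" for y
    using C(2) strip vanish(1) by fastforce+
  then have "integral K (\<lambda>p. (\<phi> p)\<^sup>2) \<le> l\<^sup>2 * integral K (\<lambda>p. (px \<phi> p)\<^sup>2)"
    unfolding K_def using l smooth
    by (intro poincare_x_box smooth2_continuous smooth2_px smooth2_has_derivative_x)
  moreover have "continuous_on UNIV \<phi>" "continuous_on UNIV (px \<phi>)"
    using smooth by (simp_all add: smooth2_continuous smooth2_px)
  then have "(LINT p:\<Omega>|lborel. (\<phi> p)\<^sup>2) = integral K (\<lambda>p. (\<phi> p)\<^sup>2)"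
    "(LINT p:\<Omega>|lborel. (px \<phi> p)\<^sup>2) = integral K (\<lambda>p. (px \<phi> p)\<^sup>2)"
    by (intro set_integral_compact_support_eq_integral[OF _ C \<open>C \<subseteq> K\<close>] continuous_on_power;
        simp add: vanish)+
  ultimately have "(L2norm \<Omega> \<phi>)\<^sup>2 \<le> (l * L2norm \<Omega> (px \<phi>))\<^sup>2"
    by (simp add: L2norm_power2 power_mult_distrib)
  then show ?thesis
    using l L2norm_nonneg by (simp add: power2_le_iff_abs_le)
qed

lemma H10_poincare_x:
  assumes l: "0 \<le> l" and strip: "\<Omega> \<subseteq> {p. 0 < fst p \<and> fst p < l}"
    and u: "H10 \<Omega> u" and ux: "L2 \<Omega> ux" "weak_deriv \<Omega> 1 0 u ux"
  shows "L2norm \<Omega> u \<le> l * L2norm \<Omega> ux"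
proof -
  obtain ux' \<phi>s where u': "L2 \<Omega> u" "L2 \<Omega> ux'" "weak_deriv \<Omega> 1 0 u ux'"
    and \<phi>s: "\<And>n. test_fun \<Omega> (\<phi>s n)"
    and lim_u: "(\<lambda>n. L2norm \<Omega> (\<lambda>p. \<phi>s n p - u p)) \<longlonglongrightarrow> 0"
    and lim_ux': "(\<lambda>n. L2norm \<Omega> (\<lambda>p. px (\<phi>s n) p - ux' p)) \<longlonglongrightarrow> 0"
    using u unfolding H10_def by blast
  have L2_\<phi>s: "L2 \<Omega> (\<phi>s n)" and L2_px_\<phi>s: "L2 \<Omega> (px (\<phi>s n))" for n
    using \<phi>s by (simp_all add: test_fun_L2 test_fun_px)
  \<comment> \<open>The limit ux' of the approximating x-derivatives is only known to agree with ux
    against test functions, which suffices to compare their norms.\<close>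
  have "L2norm \<Omega> ux' \<le> L2norm \<Omega> ux"
    using ux(1) u'(2) L2_px_\<phi>s lim_ux'
    by (rule L2norm_le_of_inner_eq_on_approx)
      (rule weak_deriv_test_fun_eq[OF ux(2) u'(3) test_fun_px[OF \<phi>s]])
  moreover have "L2norm \<Omega> u \<le> l * L2norm \<Omega> ux'"
  proof (rule LIMSEQ_le)
    show "(\<lambda>n. L2norm \<Omega> (\<phi>s n)) \<longlonglongrightarrow> L2norm \<Omega> u"
      by (rule L2norm_tendsto[OF u'(1) L2_\<phi>s lim_u])
    show "(\<lambda>n. l * L2norm \<Omega> (px (\<phi>s n))) \<longlonglongrightarrow> l * L2norm \<Omega> ux'"
      by (intro tendsto_mult_left L2norm_tendsto[OF u'(2) L2_px_\<phi>s lim_ux'])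
    show "\<exists>N. \<forall>n\<ge>N. L2norm \<Omega> (\<phi>s n) \<le> l * L2norm \<Omega> (px (\<phi>s n))"
      using poincare_x_test_fun[OF l strip \<phi>s] by blast
  qed
  ultimately show ?thesis
    using l by (meson mult_left_mono order_trans)
qed

theorem mainTheorem3:
  fixes l b1 b2 L :: real and \<Omega> :: "(real \<times> real) set"
    and u ux :: "real \<times> real \<Rightarrow> real"
  assumes "l > 0" and "b1 < b2"
    and "\<Omega> = {(x, y). 0 < x \<and> x < l \<and> b1 / l * x < y \<and> y < b2 / l * x}"
    and "L = Max {dist (0, 0) (l, b1), dist (0, 0) (l, b2), dist (l, b1) (l, b2)}"
    and "H10 \<Omega> u" and "H_all \<Omega> u"
    and "L2 \<Omega> ux" and "weak_deriv \<Omega> 1 0 u ux"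
  shows "L2norm \<Omega> u \<le> L * sqrt (exp 1 - 1) * L2norm \<Omega> ux"
proof -
  have "\<Omega> \<subseteq> {p. 0 < fst p \<and> fst p < l}"
    using assms(3) by auto
  then have "L2norm \<Omega> u \<le> l * L2norm \<Omega> ux"
    using assms(1,5,7,8) by (intro H10_poincare_x) auto
  also have "\<dots> \<le> L * sqrt (exp 1 - 1) * L2norm \<Omega> ux"
  proof (rule mult_right_mono[OF _ L2norm_nonneg])
    have "l \<le> dist (0, 0) (l, b1)"
      by (simp add: dist_Pair_Pair dist_real_def real_sqrt_sum_squares_ge1)
    also have "\<dots> \<le> L"
      unfolding assms(4) by (rule Max_ge) auto
    finally have "l \<le> L" .
    moreover have "1 \<le> sqrt (exp 1 - 1)"
      using exp_ge_add_one_self[of "1::real"] by simp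
    ultimately show "l \<le> L * sqrt (exp 1 - 1)"
      using assms(1) by (simp add: mult_le_cancel_left1 order_trans)
  qed
  finally show ?thesis .
qed

end
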